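(* Under the setting and assumptions (A1)–(A3) below, with $N>L$, let $\widehat{Q}_{N,L}\in\operatorname{argmin}_{Q\in\mathcal{Q}_d}\mathrm{MoM}_L^N(f_Q)$ and $Q^\ast\in\operatorname{argmin}_{Q\in\mathcal{Q}_d}Pf_Q$. Then with probability at least $1-2\exp\!\left(-2L\left(\frac{2}{4+\eta}-\frac{|\mathcal{O}|}{L}\right)^2\right)$, \[\left|Pf_{\widehat{Q}_{N,L}}-Pf_{Q^\ast}\right|\le 2C\max\left\{\sqrt{\frac{L}{N}},\ \frac{\sqrt{|\mathcal{I}|}}{N}\right\},\] with $C=2\max\left\{\sqrt{\frac{8(4+\eta)C(P)}{\eta}},\ \frac{16\sqrt{(p-d)\mu_4}\,(4+\eta)}{\eta}\right\}$ and $C(P)=(\mu_4+2\mu_2^2)(p-d)+(\mu_2^2-1)(p-d)^2$.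
   Context: Data $\boldsymbol{X}_1,\dots,\boldsymbol{X}_N\in\mathbb{R}^p$, with $[N]=\mathcal{I}\cup\mathcal{O}$ a disjoint partition into inliers and outliers; $B_1,\dots,B_L$ a partition of $[N]$ into $L$ blocks each of size $B=N/L$. Assumptions: (A1) $\{\boldsymbol{X}_i\}_{i\in\mathcal{I}}$ are i.i.d. with distribution $P$; (A2) $\mu_4=\int\|\boldsymbol{x}\|^4P(d\boldsymbol{x})<\infty$; (A3) there exists $\eta>0$ with $L>(2+\eta)|\mathcal{O}|$; nothing is assumed about $\{\boldsymbol{X}_i\}_{i\in\mathcal{O}}$. $\mathcal{Q}_d$ is the set of $p\times p$ (orthogonal) projection matrices of rank $d$; $f_Q(\boldsymbol{x})=\boldsymbol{x}^\top(I-Q)\boldsymbol{x}$; $Pf_Q=\int f_Q\,dP$; $P_{B_\ell}f_Q=\frac1B\sum_{i\in B_\ell}f_Q(\boldsymbol{X}_i)$; $\mathrm{MoM}_L^N(f_Q)=\mathrm{Median}\{P_{B_\ell}f_Q:\ell=1,\dots,L\}$; $\mu_k=\int\|\boldsymbol{x}\|_2^k\,dP$. *)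

theory Defs
  imports "HOL-Probability.Probability"
begin

definition proj_mats :: "nat \<Rightarrow> (real^'p^'p) set" where
  "proj_mats d = {Q. transpose Q = Q \<and> Q ** Q = Q \<and> rank Q = d}"

definition fQ :: "real^'p^'p \<Rightarrow> real^'p \<Rightarrow> real" where
  "fQ Q x = x \<bullet> ((mat 1 - Q) *v x)"

definition median :: "real list \<Rightarrow> real" where
  "median xs = (let s = sort xs; n = length xs in
     if odd n then s ! (n div 2) else (s ! (n div 2 - 1) + s ! (n div 2)) / 2)"

definition MoM :: "nat \<Rightarrow> (nat \<Rightarrow> nat set) \<Rightarrow> nat \<Rightarrow> (nat \<Rightarrow> real^'p)
    \<Rightarrow> real^'p^'p \<Rightarrow> real" where
  "MoM L Bl Bsz x Q = median (map (\<lambda>l. (1 / real Bsz) * (\<Sum>i\<in>Bl l. fQ Q (x i))) [1..<L+1])"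

end

theory Submission
  imports Defs
begin

(* Write f_Q(x) = sum_jk (I - Q)_jk x_j x_k. Since the Frobenius norm of I - Q is sqrt (p - d)
   for every rank-d projection Q, Cauchy-Schwarz bounds the deviation of the block mean of f_Q
   from P f_Q by sqrt (p - d) times the Frobenius distance between the block's empirical
   second-moment matrix and that of P, uniformly in Q. For a block of inliers the squared
   distance has expectation at most mu4 / B, so by Markov it exceeds
   s = 2 (4 + eta) mu4 / (eta B) with probability at most q = eta / (2 (4 + eta)).
   At most |O| blocks contain an outlier, and Hoeffding's inequality over the independent
   clean blocks shows that with probability at least 1 - exp (-2 L delta^2) more than half
   of all blocks are clean with distance below s. On that event the median of the block
   means is within t = sqrt (p - d) sqrt s of P f_Q for every Q at once, so the
   median-of-means minimiser has excess risk at most 2 t. Only the fourth-moment term of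
   the constant C is needed to bound t. *)

section \<open>Orthogonal projections\<close>

lemma matrix_diff_ldistrib: "(A::'a::ring_1^'n^'m) ** (B - C) = A ** B - A ** C"
  by (simp add: vec_eq_iff matrix_matrix_mult_def sum_subtractf algebra_simps)

lemma matrix_diff_rdistrib: "((B::'a::ring_1^'n^'m) - C) ** A = B ** A - C ** A"
  by (simp add: vec_eq_iff matrix_matrix_mult_def sum_subtractf algebra_simps)

lemma trace_orthogonal_projection:
  fixes Q :: "real^'n^'n"
  assumes sym: "transpose Q = Q" and idem: "Q ** Q = Q"
  shows "trace Q = real (rank Q)"
proof -
  have "subspace (range ((*v) Q))"
    by (simp add: subspace_UNIV linear_subspace_image)
  then obtain B where B: "B \<subseteq> range ((*v) Q)" "pairwise orthogonal B" "\<And>x. x \<in> B \<Longrightarrow> norm x = 1"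
    "independent B" "card B = dim (range ((*v) Q))" "span B = range ((*v) Q)"
    using orthonormal_basis_subspace by metis
  have fin: "finite B" using B(4) independent_imp_finite by blast
  have fixed: "Q *v b = b" if b: "b \<in> B" for b
  proof -
    obtain y where "b = Q *v y" using B(1) b by blast
    then show ?thesis by (simp add: matrix_vector_mul_assoc idem)
  qed
  have diag: "Q$i$i = (\<Sum>b\<in>B. b$i * b$i)" for i
  proof -
    have coeff: "(Q *v axis i 1) \<bullet> b = b$i" if "b \<in> B" for b
    proof -
      have "(Q *v axis i 1) \<bullet> b = (b v* Q) \<bullet> axis i 1"
        by (metis dot_lmul_matrix inner_commute)
      also have "b v* Q = b" using sym fixed[OF that] by (metis transpose_matrix_vector)
      finally show ?thesis by (simp add: inner_axis)
    qed
    have "Q *v axis i 1 = (\<Sum>b\<in>B. ((Q *v axis i 1) \<bullet> b) *\<^sub>R b)"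
      using orthonormal_basis_expand[OF B(2) B(3) _ fin] B(6) by auto
    also have "\<dots> = (\<Sum>b\<in>B. b$i *\<^sub>R b)" using coeff by simp
    finally have "(Q *v axis i 1)$i = (\<Sum>b\<in>B. b$i * b$i)" by simp
    then show ?thesis
      by (metis matrix_vector_mult_basis column_def vec_lambda_beta)
  qed
  have "trace Q = (\<Sum>b\<in>B. \<Sum>i\<in>UNIV. b$i * b$i)"
    unfolding trace_def diag by (rule sum.swap)
  also have "\<dots> = card B"
    using B(3) by (simp add: norm_eq_1 inner_vec_def)
  also have "\<dots> = real (rank Q)" using B(5) by (simp add: rank_dim_range)
  finally show ?thesis .
qed

lemma sum_sq_entries_complement_projection:
  fixes Q :: "real^'n^'n"
  assumes "Q \<in> proj_mats d"
  shows "(\<Sum>j\<in>UNIV. \<Sum>k\<in>UNIV. ((mat 1 - Q)$j$k)\<^sup>2) = real CARD('n) - real d"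
proof -
  have sym: "transpose Q = Q" and idem: "Q ** Q = Q" and rk: "rank Q = d"
    using assms by (auto simp: proj_mats_def)
  define A where "A = mat 1 - Q"
  have "Q$k$j = Q$j$k" for j k
    by (metis sym transpose_def vec_lambda_beta)
  then have symA: "A$k$j = A$j$k" for j k
    by (simp add: A_def mat_def)
  have idemA: "A ** A = A"
    using idem by (simp add: A_def matrix_diff_ldistrib matrix_diff_rdistrib)
  have "(\<Sum>j\<in>UNIV. \<Sum>k\<in>UNIV. (A$j$k)\<^sup>2) = trace (A ** A)"
    by (simp add: trace_def matrix_matrix_mult_def power2_eq_square symA)
  also have "\<dots> = real CARD('n) - real d"
    unfolding idemA by (simp add: A_def trace_sub trace_I trace_orthogonal_projection[OF sym idem] rk)
  finally show ?thesis by (simp add: A_def)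
qed

section \<open>Medians\<close>

lemma sorted_nth_between:
  fixes s :: "real list"
  assumes srt: "sorted s" and k: "k < length s"
    and below: "k < length (filter (\<lambda>v. lo \<le> v \<and> v \<le> hi) s)"
    and above: "length s - k - 1 < length (filter (\<lambda>v. lo \<le> v \<and> v \<le> hi) s)"
  shows "lo \<le> s!k \<and> s!k \<le> hi"
proof (rule ccontr)
  let ?P = "\<lambda>v::real. lo \<le> v \<and> v \<le> hi"
  assume "\<not> ?P (s!k)"
  then consider "s!k < lo" | "s!k > hi" by linarith
  then show False
  proof cases
    case 1
    have "\<not> ?P x" if "x \<in> set (take (Suc k) s)" for x
    proof -
      obtain i where "i \<le> k" "x = s!i"
        using \<open>x \<in> set (take (Suc k) s)\<close> by (auto simp: in_set_conv_nth less_Suc_eq_le)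
      then show ?thesis using sorted_nth_mono[OF srt, of i k] k 1 by auto
    qed
    then have "filter ?P (take (Suc k) s) = []"
      by (simp add: filter_empty_conv)
    then have "length (filter ?P s) = length (filter ?P (drop (Suc k) s))"
      by (metis append_take_drop_id filter_append self_append_conv2)
    also have "\<dots> \<le> length s - Suc k"
      by (metis length_drop length_filter_le)
    finally
    show False using above by simp
  next
    case 2
    have "\<not> ?P x" if "x \<in> set (drop k s)" for x
    proof -
      obtain i where "k + i < length s" "x = s!(k+i)"
        using \<open>x \<in> set (drop k s)\<close> by (auto simp: in_set_conv_nth) (metis less_diff_conv add.commute)
      then show ?thesis using sorted_nth_mono[OF srt, of k "k+i"] 2 by auto
    qed
    then have "filter ?P (drop k s) = []"
      by (simp add: filter_empty_conv)
    then have "length (filter ?P s) = length (filter ?P (take k s))"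
      by (metis append_take_drop_id filter_append append_Nil2)
    also have "\<dots> \<le> k"
      by (metis length_take length_filter_le min.boundedE)
    finally
    show False using below by simp
  qed
qed

lemma median_between:
  fixes xs :: "real list"
  assumes majority: "length xs < 2 * length (filter (\<lambda>v. lo \<le> v \<and> v \<le> hi) xs)"
  shows "lo \<le> median xs \<and> median xs \<le> hi"
proof -
  let ?P = "\<lambda>v::real. lo \<le> v \<and> v \<le> hi"
  define s where "s = sort xs"
  define n where "n = length xs"
  have "length (filter ?P s) = length (filter ?P xs)"
    unfolding s_def by (metis mset_filter mset_sort size_mset)
  then have n_lt: "n < 2 * length (filter ?P s)"
    using majority by (simp add: n_def)
  have "length (filter ?P s) \<le> n"
    by (metis length_filter_le length_sort n_def s_def)
  then have between: "?P (s!k)" if "k < n" "k < length (filter ?P s)" "n - k - 1 < length (filter ?P s)" for k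
    using sorted_nth_between[of s k lo hi] that by (simp add: s_def n_def)
  show ?thesis
  proof (cases "odd n")
    case True
    then have "?P (s ! (n div 2))"
      using n_lt \<open>length (filter ?P s) \<le> n\<close> by (intro between) (auto elim!: oddE)
    then show ?thesis using True by (simp add: median_def s_def n_def Let_def)
  next
    case False
    have "?P (s ! (n div 2))" "?P (s ! (n div 2 - 1))"
      using False n_lt \<open>length (filter ?P s) \<le> n\<close> by (intro between; auto elim!: evenE)+
    then show ?thesis using False by (simp add: median_def s_def n_def Let_def)
  qed
qed

lemma median_close_if_majority_close:
  fixes f :: "nat \<Rightarrow> real"
  assumes G: "G \<subseteq> {1..L}" and majority: "real L < 2 * real (card G)"
    and close: "\<And>l. l \<in> G \<Longrightarrow> \<bar>f l - r\<bar> \<le> t"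
  shows "\<bar>median (map f [1..<L+1]) - r\<bar> \<le> t"
proof -
  let ?P = "\<lambda>v. r - t \<le> v \<and> v \<le> r + t"
  define xs where "xs = map f [1..<L+1]"
  have "length (filter ?P xs) = length (filter (?P \<circ> f) [1..<L+1])"
    by (simp add: xs_def filter_map)
  also have "\<dots> = card ({l. (?P \<circ> f) l} \<inter> set [1..<L+1])"
    by (rule distinct_length_filter) simp
  also have "set [1..<L+1] = {1..L}" by auto
  finally have count: "length (filter ?P xs) = card ({l. ?P (f l)} \<inter> {1..L})"
    by (simp only: comp_def)
  have "G \<subseteq> {l. ?P (f l)} \<inter> {1..L}"
  proof
    fix l assume "l \<in> G"
    then show "l \<in> {l. ?P (f l)} \<inter> {1..L}"
      using G close[of l] by auto
  qed
  then have "card G \<le> length (filter ?P xs)"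
    unfolding count by (simp add: card_mono)
  moreover have "length xs = L" by (simp add: xs_def)
  ultimately have "length xs < 2 * length (filter ?P xs)"
    using majority by linarith
  then have "?P (median xs)" by (rule median_between)
  then show ?thesis by (simp add: xs_def abs_le_iff)
qed

section \<open>Second moments\<close>

definition second_moment :: "(real^'n) measure \<Rightarrow> 'n \<Rightarrow> 'n \<Rightarrow> real" where
  "second_moment P j k = (\<integral>x. x$j * x$k \<partial>P)"

definition second_moment_dev :: "(real^'n) measure \<Rightarrow> nat set \<Rightarrow> (nat \<Rightarrow> real^'n) \<Rightarrow> real" where
  "second_moment_dev P S x =
     (\<Sum>j\<in>UNIV. \<Sum>k\<in>UNIV. ((1 / real (card S)) * (\<Sum>i\<in>S. x i $ j * x i $ k) - second_moment P j k)\<^sup>2)"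

lemma fQ_eq_double_sum: "fQ Q y = (\<Sum>j\<in>UNIV. \<Sum>k\<in>UNIV. (mat 1 - Q)$j$k * (y$j * y$k))"
  by (simp add: fQ_def inner_vec_def matrix_vector_mult_def sum_distrib_left algebra_simps)

lemma power4_norm_eq_double_sum: "norm (y::real^'n) ^ 4 = (\<Sum>j\<in>UNIV. \<Sum>k\<in>UNIV. (y$j * y$k)\<^sup>2)"
proof -
  have "norm y ^ 4 = (norm y ^ 2)\<^sup>2" by simp
  also have "norm y ^ 2 = (\<Sum>j\<in>UNIV. (y$j)\<^sup>2)"
    by (simp add: norm_vec_def L2_set_def sum_nonneg)
  also have "(\<Sum>j\<in>UNIV. (y$j)\<^sup>2)\<^sup>2 = (\<Sum>j\<in>UNIV. \<Sum>k\<in>UNIV. (y$j)\<^sup>2 * (y$k)\<^sup>2)"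
    by (simp add: power2_eq_square[of "sum _ _"] sum_product)
  finally show ?thesis
    by (simp add: power_mult_distrib)
qed

lemma
  fixes P :: "(real^'n) measure"
  assumes P: "prob_space P" and sets_P: "sets P = sets borel"
    and fourth: "integrable P (\<lambda>x. norm x ^ 4)"
  shows integrable_nth_mult_sq: "integrable P (\<lambda>x. (x$j * x$k)\<^sup>2)"
    and integrable_nth_mult: "integrable P (\<lambda>x. x$j * x$k)"
proof -
  have meas: "(\<lambda>x. x$j * x$k) \<in> borel_measurable P"
    unfolding measurable_cong_sets[OF sets_P refl] by measurable
  have "(x$j * x$k)\<^sup>2 \<le> norm x ^ 4" for x :: "real^'n"
  proof -
    have "(x$j * x$k)\<^sup>2 \<le> (\<Sum>k'\<in>UNIV. (x$j * x$k')\<^sup>2)"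
      by (rule member_le_sum) auto
    also have "\<dots> \<le> (\<Sum>j'\<in>UNIV. \<Sum>k'\<in>UNIV. (x$j' * x$k')\<^sup>2)"
      by (rule member_le_sum) (auto intro: sum_nonneg)
    finally show ?thesis by (simp add: power4_norm_eq_double_sum)
  qed
  then show sq: "integrable P (\<lambda>x. (x$j * x$k)\<^sup>2)"
    using meas by (intro Bochner_Integration.integrable_bound[OF fourth]) auto
  show "integrable P (\<lambda>x. x$j * x$k)"
    by (rule finite_measure.square_integrable_imp_integrable[OF prob_space.finite_measure[OF P] meas sq])
qed

lemma integrable_nth_mult_minus_sq:
  fixes P :: "(real^'n) measure"
  assumes "prob_space P" and "sets P = sets borel"
    and "integrable P (\<lambda>x. norm x ^ 4)"
  shows "integrable P (\<lambda>x. (x$j * x$k - c)\<^sup>2)"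
proof -
  interpret prob_space P by fact
  have "integrable P (\<lambda>x. (x$j * x$k)\<^sup>2 - 2 * c * (x$j * x$k) + c\<^sup>2)"
    using integrable_nth_mult_sq[OF assms] integrable_nth_mult[OF assms] by auto
  then show ?thesis by (simp add: power2_diff algebra_simps)
qed

lemma centered_nth_mult_sq_integral_le:
  fixes P :: "(real^'n) measure"
  assumes "prob_space P" and "sets P = sets borel"
    and "integrable P (\<lambda>x. norm x ^ 4)"
  shows "(\<integral>y. (y$j * y$k - second_moment P j k)\<^sup>2 \<partial>P) \<le> (\<integral>y. (y$j * y$k)\<^sup>2 \<partial>P)"
proof -
  interpret prob_space P by fact
  have "(\<integral>y. (y$j * y$k - second_moment P j k)\<^sup>2 \<partial>P)
      = (\<integral>y. (y$j * y$k)\<^sup>2 \<partial>P) - (second_moment P j k)\<^sup>2"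
    using variance_eq[OF integrable_nth_mult[OF assms] integrable_nth_mult_sq[OF assms]]
    by (simp add: second_moment_def)
  then show ?thesis by simp
qed

lemma abs_double_sum_mult_le:
  fixes a e :: "'n::finite \<Rightarrow> 'n \<Rightarrow> real"
  shows "\<bar>\<Sum>j\<in>UNIV. \<Sum>k\<in>UNIV. a j k * e j k\<bar>
     \<le> sqrt (\<Sum>j\<in>UNIV. \<Sum>k\<in>UNIV. (a j k)\<^sup>2) * sqrt (\<Sum>j\<in>UNIV. \<Sum>k\<in>UNIV. (e j k)\<^sup>2)"
proof -
  let ?a = "\<lambda>p. a (fst p) (snd p)" and ?e = "\<lambda>p. e (fst p) (snd p)"
  have "\<bar>\<Sum>j\<in>UNIV. \<Sum>k\<in>UNIV. a j k * e j k\<bar> = \<bar>\<Sum>p\<in>UNIV. ?a p * ?e p\<bar>"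
    by (simp add: sum.cartesian_product' case_prod_beta' UNIV_Times_UNIV[symmetric] del: UNIV_Times_UNIV)
  also have "\<dots> \<le> (\<Sum>p\<in>UNIV. \<bar>?a p\<bar> * \<bar>?e p\<bar>)"
    by (metis (no_types, lifting) abs_mult sum.cong sum_abs)
  also have "\<dots> \<le> L2_set ?a UNIV * L2_set ?e UNIV"
    by (rule L2_set_mult_ineq)
  also have "\<dots> = sqrt (\<Sum>j\<in>UNIV. \<Sum>k\<in>UNIV. (a j k)\<^sup>2) * sqrt (\<Sum>j\<in>UNIV. \<Sum>k\<in>UNIV. (e j k)\<^sup>2)"
    by (simp add: L2_set_def sum.cartesian_product' case_prod_beta' UNIV_Times_UNIV[symmetric] del: UNIV_Times_UNIV)
  finally show ?thesis .
qed

lemma abs_block_mean_fQ_minus_risk_le: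
  fixes P :: "(real^'n) measure" and Q :: "real^'n^'n"
  assumes Q: "Q \<in> proj_mats d" and P: "prob_space P" and sets_P: "sets P = sets borel"
    and fourth: "integrable P (\<lambda>x. norm x ^ 4)"
  shows "\<bar>(1 / real (card S)) * (\<Sum>i\<in>S. fQ Q (x i)) - (\<integral>y. fQ Q y \<partial>P)\<bar>
           \<le> sqrt (real CARD('n) - real d) * sqrt (second_moment_dev P S x)"
proof -
  define a where "a j k = (mat 1 - Q)$j$k" for j k
  define c where "c = 1 / real (card S)"
  have empirical: "c * (\<Sum>i\<in>S. fQ Q (x i))
      = (\<Sum>j\<in>UNIV. \<Sum>k\<in>UNIV. a j k * (c * (\<Sum>i\<in>S. x i $ j * x i $ k)))"
    unfolding fQ_eq_double_sum a_def
    by (simp add: sum_distrib_left algebra_simps sum.swap[of _ S])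
  have population: "(\<integral>y. fQ Q y \<partial>P) = (\<Sum>j\<in>UNIV. \<Sum>k\<in>UNIV. a j k * second_moment P j k)"
    unfolding fQ_eq_double_sum a_def second_moment_def
    using integrable_nth_mult[OF P sets_P fourth] by simp
  have "c * (\<Sum>i\<in>S. fQ Q (x i)) - (\<integral>y. fQ Q y \<partial>P)
     = (\<Sum>j\<in>UNIV. \<Sum>k\<in>UNIV. a j k * (c * (\<Sum>i\<in>S. x i $ j * x i $ k) - second_moment P j k))"
    unfolding empirical population by (simp add: sum_subtractf algebra_simps)
  also have "\<bar>\<dots>\<bar> \<le> sqrt (\<Sum>j\<in>UNIV. \<Sum>k\<in>UNIV. (a j k)\<^sup>2) * sqrt (second_moment_dev P S x)"
    unfolding second_moment_dev_def c_def by (rule abs_double_sum_mult_le)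
  also have "(\<Sum>j\<in>UNIV. \<Sum>k\<in>UNIV. (a j k)\<^sup>2) = real CARD('n) - real d"
    unfolding a_def by (rule sum_sq_entries_complement_projection[OF Q])
  finally show ?thesis by (simp add: c_def)
qed

section \<open>Sums of independent variables\<close>

lemma (in prob_space) integral_sq_sum_indep_mean_zero:
  fixes Y :: "'i \<Rightarrow> 'a \<Rightarrow> real"
  assumes fin: "finite S" and indep: "indep_vars (\<lambda>_. borel) Y S"
    and int: "\<And>i. i \<in> S \<Longrightarrow> integrable M (Y i)"
    and mean0: "\<And>i. i \<in> S \<Longrightarrow> expectation (Y i) = 0"
    and int_sq: "\<And>i. i \<in> S \<Longrightarrow> integrable M (\<lambda>\<omega>. (Y i \<omega>)\<^sup>2)"
  shows "integrable M (\<lambda>\<omega>. (\<Sum>i\<in>S. Y i \<omega>)\<^sup>2)"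
    and "expectation (\<lambda>\<omega>. (\<Sum>i\<in>S. Y i \<omega>)\<^sup>2) = (\<Sum>i\<in>S. expectation (\<lambda>\<omega>. (Y i \<omega>)\<^sup>2))"
proof -
  have cross: "integrable M (\<lambda>\<omega>. Y i \<omega> * Y i' \<omega>) \<and>
      expectation (\<lambda>\<omega>. Y i \<omega> * Y i' \<omega>) = (if i = i' then expectation (\<lambda>\<omega>. (Y i \<omega>)\<^sup>2) else 0)"
    if "i \<in> S" "i' \<in> S" for i i'
  proof (cases "i = i'")
    case True
    then show ?thesis using int_sq[of i] that by (simp add: power2_eq_square)
  next
    case False
    have pair: "indep_vars (\<lambda>_. borel) Y {i, i'}"
      by (rule indep_vars_subset[OF indep]) (use that in auto)
    have pair_int: "\<And>l. l \<in> {i, i'} \<Longrightarrow> integrable M (Y l)" using int that by auto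
    have "integrable M (\<lambda>\<omega>. \<Prod>l\<in>{i, i'}. Y l \<omega>)"
      by (rule indep_vars_integrable[OF _ pair pair_int]) auto
    moreover have "expectation (\<lambda>\<omega>. \<Prod>l\<in>{i, i'}. Y l \<omega>) = (\<Prod>l\<in>{i, i'}. expectation (Y l))"
      by (rule indep_vars_lebesgue_integral[OF _ pair pair_int]) auto
    ultimately show ?thesis using False mean0 that by auto
  qed
  have square: "(\<Sum>i\<in>S. Y i \<omega>)\<^sup>2 = (\<Sum>i\<in>S. \<Sum>i'\<in>S. Y i \<omega> * Y i' \<omega>)" for \<omega>
    by (simp add: power2_eq_square sum_product)
  show "integrable M (\<lambda>\<omega>. (\<Sum>i\<in>S. Y i \<omega>)\<^sup>2)"
    unfolding square using cross by (intro Bochner_Integration.integrable_sum) auto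
  have "expectation (\<lambda>\<omega>. (\<Sum>i\<in>S. Y i \<omega>)\<^sup>2)
      = (\<Sum>i\<in>S. \<Sum>i'\<in>S. expectation (\<lambda>\<omega>. Y i \<omega> * Y i' \<omega>))"
    unfolding square using cross by (simp add: Bochner_Integration.integrable_sum)
  also have "\<dots> = (\<Sum>i\<in>S. \<Sum>i'\<in>S. if i = i' then expectation (\<lambda>\<omega>. (Y i \<omega>)\<^sup>2) else 0)"
    using cross by (intro sum.cong refl) auto
  also have "\<dots> = (\<Sum>i\<in>S. expectation (\<lambda>\<omega>. (Y i \<omega>)\<^sup>2))"
    using fin by simp
  finally show "expectation (\<lambda>\<omega>. (\<Sum>i\<in>S. Y i \<omega>)\<^sup>2) = (\<Sum>i\<in>S. expectation (\<lambda>\<omega>. (Y i \<omega>)\<^sup>2))" .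
qed

lemma
  fixes X :: "'a \<Rightarrow> 'b::topological_space" and g :: "'b \<Rightarrow> real"
  assumes X: "X \<in> measurable M borel" and distr: "distr M borel X = P"
    and g: "g \<in> borel_measurable borel" and int: "integrable P g"
  shows integrable_comp_distr: "integrable M (\<lambda>\<omega>. g (X \<omega>))"
    and integral_comp_distr: "(\<integral>\<omega>. g (X \<omega>) \<partial>M) = (\<integral>y. g y \<partial>P)"
  using integrable_distr_eq[OF X g] integral_distr[OF X g] int distr by simp_all

lemma integral_sq_sum_iid_mean_zero:
  fixes X :: "'i \<Rightarrow> 'a \<Rightarrow> 'b::topological_space" and g :: "'b \<Rightarrow> real"
  assumes M: "prob_space M" and S: "S \<subseteq> I" "finite S"
    and meas: "\<And>i. i \<in> I \<Longrightarrow> X i \<in> measurable M borel"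
    and indep: "prob_space.indep_vars M (\<lambda>_. borel) X I"
    and distr: "\<And>i. i \<in> I \<Longrightarrow> distr M borel (X i) = P"
    and g_meas: "g \<in> borel_measurable borel" and g_int: "integrable P g"
    and g_sq_int: "integrable P (\<lambda>y. (g y)\<^sup>2)" and g_mean: "(\<integral>y. g y \<partial>P) = 0"
  shows "integrable M (\<lambda>\<omega>. (\<Sum>i\<in>S. g (X i \<omega>))\<^sup>2)"
    and "(\<integral>\<omega>. (\<Sum>i\<in>S. g (X i \<omega>))\<^sup>2 \<partial>M) = real (card S) * (\<integral>y. (g y)\<^sup>2 \<partial>P)"
proof -
  interpret prob_space M by fact
  have g_sq_meas: "(\<lambda>y. (g y)\<^sup>2) \<in> borel_measurable borel"
    using g_meas by measurable
  have "indep_vars (\<lambda>_. borel) (\<lambda>i \<omega>. g (X i \<omega>)) S"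
    using indep_vars_compose2[OF indep_vars_subset[OF indep S(1)], of "\<lambda>_. g" "\<lambda>_. borel"] g_meas
    by simp
  note Bienayme = integral_sq_sum_indep_mean_zero[OF S(2) this]
  have "i \<in> I \<Longrightarrow> integrable M (\<lambda>\<omega>. g (X i \<omega>))"
    and "i \<in> I \<Longrightarrow> expectation (\<lambda>\<omega>. g (X i \<omega>)) = 0"
    and "i \<in> I \<Longrightarrow> integrable M (\<lambda>\<omega>. (g (X i \<omega>))\<^sup>2)"
    and "i \<in> I \<Longrightarrow> expectation (\<lambda>\<omega>. (g (X i \<omega>))\<^sup>2) = (\<integral>y. (g y)\<^sup>2 \<partial>P)" for i
    using integrable_comp_distr[OF meas distr g_meas g_int] integral_comp_distr[OF meas distr g_meas g_int]
      integrable_comp_distr[OF meas distr g_sq_meas g_sq_int] integral_comp_distr[OF meas distr g_sq_meas g_sq_int]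
      g_mean by simp_all
  with Bienayme S(1)
  show "integrable M (\<lambda>\<omega>. (\<Sum>i\<in>S. g (X i \<omega>))\<^sup>2)"
    and "(\<integral>\<omega>. (\<Sum>i\<in>S. g (X i \<omega>))\<^sup>2 \<partial>M) = real (card S) * (\<integral>y. (g y)\<^sup>2 \<partial>P)"
    by (simp_all add: subset_iff)
qed

lemma second_moment_dev_integral_le:
  fixes M :: "'w measure" and X :: "nat \<Rightarrow> 'w \<Rightarrow> real^'n" and P :: "(real^'n) measure"
  assumes M: "prob_space M" and S: "S \<subseteq> I" "finite S" "S \<noteq> {}"
    and meas: "\<And>i. i \<in> I \<Longrightarrow> X i \<in> measurable M borel"
    and indep: "prob_space.indep_vars M (\<lambda>_. borel) X I"
    and distr: "\<And>i. i \<in> I \<Longrightarrow> distr M borel (X i) = P"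
    and P: "prob_space P" and sets_P: "sets P = sets borel"
    and fourth: "integrable P (\<lambda>x. norm x ^ 4)"
  shows "integrable M (\<lambda>\<omega>. second_moment_dev P S (\<lambda>i. X i \<omega>))"
    and "(\<integral>\<omega>. second_moment_dev P S (\<lambda>i. X i \<omega>) \<partial>M) \<le> (\<integral>y. norm y ^ 4 \<partial>P) / real (card S)"
proof -
  define n where "n = real (card S)"
  have n_pos: "n > 0" using S by (simp add: n_def card_gt_0_iff)
  define g where "g j k y = y$j * y$k - second_moment P j k" for j k and y :: "real^'n"
  have g_meas: "g j k \<in> borel_measurable borel" for j k
    unfolding g_def by measurable
  have g_int: "integrable P (g j k)" for j k
    using integrable_nth_mult[OF P sets_P fourth] prob_space.finite_measure[OF P]
    unfolding g_def by (intro Bochner_Integration.integrable_diff finite_measure.integrable_const) auto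
  have g_sq_int: "integrable P (\<lambda>y. (g j k y)\<^sup>2)" for j k
    unfolding g_def by (rule integrable_nth_mult_minus_sq[OF P sets_P fourth])
  have g_mean: "(\<integral>y. g j k y \<partial>P) = 0" for j k
    using integrable_nth_mult[OF P sets_P fourth, of j k] prob_space.prob_space[OF P]
      prob_space.finite_measure[OF P]
    unfolding g_def second_moment_def
    by (simp add: Bochner_Integration.integral_diff finite_measure.integrable_const)
  note sum_sq = integral_sq_sum_iid_mean_zero[OF M S(1,2) meas indep distr g_meas g_int g_sq_int g_mean,
      folded n_def]
  have dev_eq: "second_moment_dev P S (\<lambda>i. X i \<omega>)
      = (\<Sum>j\<in>UNIV. \<Sum>k\<in>UNIV. (1 / n)\<^sup>2 * (\<Sum>i\<in>S. g j k (X i \<omega>))\<^sup>2)" for \<omega>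
  proof -
    have "(1 / n) * (\<Sum>i\<in>S. X i \<omega> $ j * X i \<omega> $ k) - second_moment P j k
        = (1 / n) * (\<Sum>i\<in>S. g j k (X i \<omega>))" for j k
      using n_pos by (simp add: g_def sum_subtractf n_def field_simps)
    then show ?thesis
      by (simp add: second_moment_dev_def n_def power_mult_distrib[symmetric])
  qed
  show "integrable M (\<lambda>\<omega>. second_moment_dev P S (\<lambda>i. X i \<omega>))"
    unfolding dev_eq using sum_sq(1) by auto
  have "(\<integral>\<omega>. second_moment_dev P S (\<lambda>i. X i \<omega>) \<partial>M)
      = (\<Sum>j\<in>UNIV. \<Sum>k\<in>UNIV. (1 / n)\<^sup>2 * (n * (\<integral>y. (g j k y)\<^sup>2 \<partial>P)))"
    unfolding dev_eq using sum_sq by (simp add: Bochner_Integration.integrable_sum)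
  also have "\<dots> = (\<Sum>j\<in>UNIV. \<Sum>k\<in>UNIV. (\<integral>y. (g j k y)\<^sup>2 \<partial>P)) / n"
    using n_pos by (simp add: sum_divide_distrib power2_eq_square)
  also have "\<dots> \<le> (\<Sum>j\<in>UNIV. \<Sum>k\<in>UNIV. (\<integral>y. (y$j * y$k)\<^sup>2 \<partial>P)) / n"
    using n_pos unfolding g_def
    by (intro divide_right_mono sum_mono centered_nth_mult_sq_integral_le[OF P sets_P fourth]) auto
  also have "(\<Sum>j\<in>UNIV. \<Sum>k\<in>UNIV. (\<integral>y. (y$j * y$k)\<^sup>2 \<partial>P)) = (\<integral>y. norm y ^ 4 \<partial>P)"
    unfolding power4_norm_eq_double_sum using integrable_nth_mult_sq[OF P sets_P fourth]
    by (simp add: Bochner_Integration.integrable_sum)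
  finally show "(\<integral>\<omega>. second_moment_dev P S (\<lambda>i. X i \<omega>) \<partial>M) \<le> (\<integral>y. norm y ^ 4 \<partial>P) / real (card S)"
    by (simp add: n_def)
qed

lemma second_moment_dev_cong:
  assumes "\<And>i. i \<in> S \<Longrightarrow> x i = x' i"
  shows "second_moment_dev P S x = second_moment_dev P S x'"
proof -
  have "(\<Sum>i\<in>S. x i $ j * x i $ k) = (\<Sum>i\<in>S. x' i $ j * x' i $ k)" for j k
    using assms by (intro sum.cong) auto
  then show ?thesis by (simp add: second_moment_dev_def)
qed

lemma second_moment_dev_nonneg: "0 \<le> second_moment_dev P S x"
  unfolding second_moment_dev_def by (simp add: sum_nonneg)

lemma second_moment_dev_measurable:
  "second_moment_dev P S \<in> borel_measurable (Pi\<^sub>M S (\<lambda>_. borel :: (real^'n) measure))"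
proof -
  have "(\<lambda>x. x i $ j) \<in> borel_measurable (Pi\<^sub>M S (\<lambda>_. borel :: (real^'n) measure))"
    if "i \<in> S" for i j
    using measurable_component_singleton[OF that] by (rule measurable_compose) simp
  then show ?thesis
    unfolding second_moment_dev_def
    by (intro borel_measurable_sum borel_measurable_power borel_measurable_diff borel_measurable_times
        borel_measurable_const)
qed

section \<open>Median of means with outliers\<close>

lemma exp_neg_two_sq_div_le:
  fixes k L \<delta> e :: real
  assumes k: "0 < k" "k \<le> L" and \<delta>: "0 \<le> \<delta>" and e: "L * \<delta> \<le> e"
  shows "exp (- 2 * e\<^sup>2 / k) \<le> exp (- 2 * L * \<delta>\<^sup>2)"
proof -
  have "L * \<delta>\<^sup>2 = (L * \<delta>)\<^sup>2 / L" using k by (simp add: power2_eq_square)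
  also have "\<dots> \<le> e\<^sup>2 / L"
    using k \<delta> e by (intro divide_right_mono power_mono) auto
  also have "\<dots> \<le> e\<^sup>2 / k"
    using k by (intro divide_left_mono) auto
  finally show ?thesis by simp
qed

lemma outlier_margin:
  fixes \<eta> L m k :: real
  assumes \<eta>: "\<eta> > 0" and m: "0 \<le> m" and outliers: "(2 + \<eta>) * m < L" and k: "0 \<le> k" "k \<le> L"
  shows "0 < 2 / (4 + \<eta>) - m / L"
    and "L * (2 / (4 + \<eta>) - m / L) \<le> L / 2 - m - \<eta> / (2 * (4 + \<eta>)) * k"
proof -
  have "0 \<le> (2 + \<eta>) * m" using \<eta> m by simp
  then have L: "L > 0" using outliers by linarith
  have "m / L < 1 / (2 + \<eta>)"
    using outliers L \<eta> by (simp add: field_simps mult.commute)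
  also have "1 / (2 + \<eta>) \<le> 2 / (4 + \<eta>)" using \<eta> by (simp add: field_simps)
  finally show "0 < 2 / (4 + \<eta>) - m / L" by simp
  have "L * (2 / (4 + \<eta>) - m / L) = 2 * L / (4 + \<eta>) - m"
    using L by (simp add: right_diff_distrib)
  also have "\<dots> = L / 2 - m - \<eta> / (2 * (4 + \<eta>)) * L"
    using \<eta> by (simp add: field_simps)
  finally show "L * (2 / (4 + \<eta>) - m / L) \<le> L / 2 - m - \<eta> / (2 * (4 + \<eta>)) * k"
    using mult_left_mono[OF k(2), of "\<eta> / (2 * (4 + \<eta>))"] \<eta> by simp
qed

lemma sqrt_mult_sqrt_threshold_le:
  fixes \<eta> m B r :: real
  assumes \<eta>: "\<eta> > 0" and m: "m \<ge> 0" and B: "B > 0" and r: "r \<ge> 0"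
  shows "sqrt r * sqrt (2 * (4 + \<eta>) * m / (\<eta> * B)) \<le> 16 * sqrt (r * m) * (4 + \<eta>) / \<eta> * sqrt (1 / B)"
proof -
  define x where "x = (4 + \<eta>) / \<eta>"
  have x: "x \<ge> 1" using \<eta> by (simp add: x_def)
  have "sqrt r * sqrt (2 * (4 + \<eta>) * m / (\<eta> * B)) = sqrt (r * m) * sqrt (2 * x) * sqrt (1 / B)"
    by (simp add: x_def real_sqrt_mult[symmetric] field_simps)
  also have "sqrt (2 * x) \<le> 16 * x"
    using x by (intro real_le_lsqrt) (auto simp: power2_eq_square)
  then have "sqrt (r * m) * sqrt (2 * x) * sqrt (1 / B) \<le> sqrt (r * m) * (16 * x) * sqrt (1 / B)"
    using r m B by (intro mult_right_mono mult_left_mono) auto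
  finally show ?thesis by (simp add: x_def algebra_simps)
qed

lemma twice_sqrt_threshold_le_constant_rate:
  fixes \<eta> m B r a c :: real
  assumes \<eta>: "\<eta> > 0" and m: "m \<ge> 0" and B: "B > 0" and r: "r \<ge> 0"
  shows "2 * (sqrt r * sqrt (2 * (4 + \<eta>) * m / (\<eta> * B)))
    \<le> 2 * (2 * max a (16 * sqrt (r * m) * (4 + \<eta>) / \<eta>)) * max (sqrt (1 / B)) c"
proof -
  define b where "b = 16 * sqrt (r * m) * (4 + \<eta>) / \<eta>"
  have "0 \<le> b" unfolding b_def using \<eta> r m by simp
  then have "b * sqrt (1 / B) \<le> (2 * max a b) * max (sqrt (1 / B)) c"
    using B by (intro mult_mono) auto
  from order_trans[OF sqrt_mult_sqrt_threshold_le[OF assms, folded b_def] this]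
  show ?thesis unfolding b_def[symmetric] by linarith
qed

locale mom_sample =
  M: prob_space M + P: prob_space P
  for M :: "'w measure" and P :: "(real^'p) measure" +
  fixes X :: "nat \<Rightarrow> 'w \<Rightarrow> real^'p" and Inl Out :: "nat set" and Bl :: "nat \<Rightarrow> nat set"
    and L Bsz :: nat
  assumes sets_P: "sets P = sets borel"
    and fourth_moment: "integrable P (\<lambda>x. norm x ^ 4)"
    and inl_measurable: "\<And>i. i \<in> Inl \<Longrightarrow> X i \<in> measurable M borel"
    and inl_indep: "M.indep_vars (\<lambda>_. borel) X Inl"
    and inl_distr: "\<And>i. i \<in> Inl \<Longrightarrow> distr M borel (X i) = P"
    and finite_Out: "finite Out"
    and blocks_subset: "\<And>l. l \<in> {1..L} \<Longrightarrow> Bl l \<subseteq> Inl \<union> Out"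
    and blocks_disjoint: "\<And>l l'. l \<in> {1..L} \<Longrightarrow> l' \<in> {1..L} \<Longrightarrow> l \<noteq> l' \<Longrightarrow> Bl l \<inter> Bl l' = {}"
    and blocks_card: "\<And>l. l \<in> {1..L} \<Longrightarrow> card (Bl l) = Bsz"
    and Bsz_pos: "Bsz > 0"
begin

definition clean_blocks :: "nat set" where
  "clean_blocks = {l \<in> {1..L}. Bl l \<subseteq> Inl}"

definition block_dev :: "nat \<Rightarrow> 'w \<Rightarrow> real" where
  "block_dev l \<omega> = second_moment_dev P (Bl l) (\<lambda>i. X i \<omega>)"

lemma clean_blocks_subset: "clean_blocks \<subseteq> {1..L}"
  by (auto simp: clean_blocks_def)

lemma block_finite_nonempty:
  assumes "l \<in> {1..L}" shows "finite (Bl l) \<and> Bl l \<noteq> {}"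
proof -
  have "card (Bl l) > 0" using blocks_card[OF assms] Bsz_pos by simp
  then show ?thesis by (simp add: card_gt_0_iff)
qed

lemma card_unclean_blocks_le: "card ({1..L} - clean_blocks) \<le> card Out"
proof -
  define outlier where "outlier l = (SOME i. i \<in> Bl l \<inter> Out)" for l
  have outlier: "outlier l \<in> Bl l \<inter> Out" if "l \<in> {1..L} - clean_blocks" for l
  proof -
    have "\<exists>i. i \<in> Bl l \<inter> Out"
      using that blocks_subset[of l] by (auto simp: clean_blocks_def)
    then show ?thesis unfolding outlier_def by (rule someI_ex)
  qed
  have "inj_on outlier ({1..L} - clean_blocks)"
  proof (rule inj_onI)
    fix l l' assume l: "l \<in> {1..L} - clean_blocks" and l': "l' \<in> {1..L} - clean_blocks"
      and same: "outlier l = outlier l'"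
    show "l = l'"
    proof (rule ccontr)
      assume "l \<noteq> l'"
      then have "Bl l \<inter> Bl l' = {}" using blocks_disjoint l l' by auto
      then show False using outlier[OF l] outlier[OF l'] same by auto
    qed
  qed
  moreover have "outlier ` ({1..L} - clean_blocks) \<subseteq> Out" using outlier by auto
  ultimately show ?thesis using card_inj_on_le finite_Out by blast
qed

lemma clean_block:
  assumes "l \<in> clean_blocks"
  shows "Bl l \<subseteq> Inl" and "finite (Bl l)" and "Bl l \<noteq> {}" and "card (Bl l) = Bsz"
  using assms block_finite_nonempty blocks_card by (auto simp: clean_blocks_def)

lemma
  assumes "l \<in> clean_blocks"
  shows integrable_block_dev: "integrable M (block_dev l)"
    and integral_block_dev_le: "(\<integral>\<omega>. block_dev l \<omega> \<partial>M) \<le> (\<integral>y. norm y ^ 4 \<partial>P) / real Bsz"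
  using second_moment_dev_integral_le[OF M.prob_space_axioms clean_block(1-3)[OF assms]
      inl_measurable inl_indep inl_distr P.prob_space_axioms sets_P fourth_moment] clean_block(4)[OF assms]
  unfolding block_dev_def by simp_all

lemma prob_block_dev_ge_le:
  assumes l: "l \<in> clean_blocks" and s: "s > 0"
  shows "M.prob {\<omega> \<in> space M. s \<le> block_dev l \<omega>} \<le> (\<integral>y. norm y ^ 4 \<partial>P) / (real Bsz * s)"
proof -
  have "M.prob {\<omega> \<in> space M. s \<le> block_dev l \<omega>} \<le> (\<integral>\<omega>. block_dev l \<omega> \<partial>M) / s"
    using integrable_block_dev[OF l] s
    by (intro integral_Markov_inequality_measure[where A="space M"])
      (auto simp: block_dev_def[abs_def] second_moment_dev_nonneg)
  also have "\<dots> \<le> (\<integral>y. norm y ^ 4 \<partial>P) / real Bsz / s"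
    using integral_block_dev_le[OF l] s by (intro divide_right_mono) auto
  finally show ?thesis by simp
qed

lemma indep_clean_block_indicators:
  "M.indep_vars (\<lambda>_. borel) (\<lambda>l \<omega>. if s \<le> block_dev l \<omega> then 1 else 0::real) clean_blocks"
proof -
  have "M.indep_vars (\<lambda>l. Pi\<^sub>M (Bl l) (\<lambda>_. borel)) (\<lambda>l \<omega>. restrict (\<lambda>i. X i \<omega>) (Bl l)) clean_blocks"
  proof (rule M.indep_vars_restrict[OF inl_indep])
    show "disjoint_family_on Bl clean_blocks"
      unfolding disjoint_family_on_def using blocks_disjoint clean_blocks_subset by blast
  qed (use clean_block in auto)
  moreover have "(\<lambda>f. if s \<le> second_moment_dev P (Bl l) f then 1 else 0::real)
      \<in> borel_measurable (Pi\<^sub>M (Bl l) (\<lambda>_. borel))" for l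
    using second_moment_dev_measurable[of P "Bl l"] by measurable
  ultimately have "M.indep_vars (\<lambda>_. borel)
      (\<lambda>l \<omega>. if s \<le> second_moment_dev P (Bl l) (restrict (\<lambda>i. X i \<omega>) (Bl l)) then 1 else 0::real)
      clean_blocks"
    by (rule M.indep_vars_compose2)
  moreover have "second_moment_dev P (Bl l) (restrict (\<lambda>i. X i \<omega>) (Bl l)) = block_dev l \<omega>" for l \<omega>
    unfolding block_dev_def by (rule second_moment_dev_cong) simp
  ultimately show ?thesis by simp
qed

lemma prob_many_bad_clean_blocks_le:
  assumes ne: "clean_blocks \<noteq> {}" and s: "s > 0"
    and q: "(\<integral>y. norm y ^ 4 \<partial>P) / (real Bsz * s) \<le> q"
    and c: "q * real (card clean_blocks) \<le> c"
  defines "Bad \<equiv> {\<omega> \<in> space M. c \<le> (\<Sum>l\<in>clean_blocks. if s \<le> block_dev l \<omega> then 1 else 0)}"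
  shows "Bad \<in> sets M"
    and "measure M Bad \<le> exp (- 2 * (c - q * real (card clean_blocks))\<^sup>2 / real (card clean_blocks))"
proof -
  let ?K = clean_blocks
  define Z where "Z l \<omega> = (if s \<le> block_dev l \<omega> then 1 else (0::real))" for l \<omega>
  have fin: "finite ?K" using clean_blocks_subset finite_subset by blast
  have Z_meas: "Z l \<in> borel_measurable M" if "l \<in> ?K" for l
    using borel_measurable_integrable[OF integrable_block_dev[OF that]] unfolding Z_def by measurable
  interpret H: Hoeffding_ineq M ?K Z "\<lambda>_. 0" "\<lambda>_. 1" "\<Sum>l\<in>?K. M.expectation (Z l)"
    using indep_clean_block_indicators by unfold_locales (auto simp: fin Z_def[abs_def])
  have "M.expectation (Z l) \<le> q" if l: "l \<in> ?K" for l
  proof -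
    have "Z l = indicator {\<omega>. s \<le> block_dev l \<omega>}" by (auto simp: Z_def fun_eq_iff)
    then have "M.expectation (Z l) = M.prob {\<omega> \<in> space M. s \<le> block_dev l \<omega>}"
      by (simp add: Int_def conj_commute)
    then show ?thesis using prob_block_dev_ge_le[OF l s] q by linarith
  qed
  then have mean: "(\<Sum>l\<in>?K. M.expectation (Z l)) \<le> q * real (card ?K)"
    using sum_mono[of ?K "\<lambda>l. M.expectation (Z l)" "\<lambda>_. q"] by (simp add: mult.commute)
  have "measure M Bad = M.prob {\<omega> \<in> space M. (\<Sum>l\<in>?K. Z l \<omega>)
      \<ge> (\<Sum>l\<in>?K. M.expectation (Z l)) + (c - (\<Sum>l\<in>?K. M.expectation (Z l)))}"
    by (simp add: Bad_def Z_def)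
  also have "\<dots> \<le> exp (- 2 * (c - (\<Sum>l\<in>?K. M.expectation (Z l)))\<^sup>2 / real (card ?K))"
    using H.Hoeffding_ineq_ge[of "c - (\<Sum>l\<in>?K. M.expectation (Z l))"] mean c ne fin
    by (simp add: card_gt_0_iff)
  also have "\<dots> \<le> exp (- 2 * (c - q * real (card ?K))\<^sup>2 / real (card ?K))"
    using mean c ne fin by (auto simp: card_gt_0_iff intro!: divide_right_mono power_mono)
  finally show "measure M Bad \<le> exp (- 2 * (c - q * real (card ?K))\<^sup>2 / real (card ?K))" .
  show "Bad \<in> sets M"
    using Z_meas fin unfolding Bad_def Z_def by measurable
qed

lemma majority_of_good_blocks:
  assumes few_bad: "(\<Sum>l\<in>clean_blocks. if s \<le> block_dev l \<omega> then 1 else 0) < real L / 2 - real (card Out)"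
  shows "real L < 2 * real (card {l \<in> clean_blocks. block_dev l \<omega> < s})"
proof -
  let ?G = "{l \<in> clean_blocks. block_dev l \<omega> < s}" and ?B = "{l \<in> clean_blocks. s \<le> block_dev l \<omega>}"
  have fin: "finite clean_blocks" using clean_blocks_subset finite_subset by blast
  have "L = card ({1..L} - clean_blocks) + card clean_blocks"
    using clean_blocks_subset fin card_mono[of "{1..L}" clean_blocks] by (simp add: card_Diff_subset)
  also have "card clean_blocks = card ?B + card ?G"
    using fin by (subst card_Un_disjoint[symmetric]) (auto intro: arg_cong[where f=card])
  finally have "real L = real (card ({1..L} - clean_blocks)) + real (card ?B) + real (card ?G)"
    by simp
  moreover have "(\<Sum>l\<in>clean_blocks. if s \<le> block_dev l \<omega> then 1 else 0) = real (card ?B)"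
    using fin by (simp add: sum.If_cases Int_def conj_commute)
  ultimately show ?thesis using few_bad card_unclean_blocks_le by linarith
qed

lemma prob_majority_of_good_blocks:
  assumes \<eta>: "\<eta> > 0" and outliers: "(2 + \<eta>) * real (card Out) < real L"
    and \<mu>4: "(\<integral>y. norm y ^ 4 \<partial>P) > 0"
  defines "s \<equiv> 2 * (4 + \<eta>) * (\<integral>y. norm y ^ 4 \<partial>P) / (\<eta> * real Bsz)"
  shows "\<exists>A\<in>sets M. 1 - exp (- 2 * real L * (2 / (4 + \<eta>) - real (card Out) / real L)\<^sup>2) \<le> measure M A
           \<and> (\<forall>\<omega>\<in>A. real L < 2 * real (card {l \<in> clean_blocks. block_dev l \<omega> < s}))"
proof -
  define q where "q = \<eta> / (2 * (4 + \<eta>))"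
  define c where "c = real L / 2 - real (card Out)"
  define \<delta> where "\<delta> = 2 / (4 + \<eta>) - real (card Out) / real L"
  let ?K = clean_blocks
  have card_K: "0 < real (card ?K)" "real (card ?K) \<le> real L"
  proof -
    have "real (card Out) \<le> (2 + \<eta>) * real (card Out)"
      using \<eta> by (simp add: mult_le_cancel_right1)
    then have "real (card Out) < real L" using outliers by linarith
    then have "card ({1..L} - ?K) < card {1..L}"
      using card_unclean_blocks_le by simp
    then show "0 < real (card ?K)" "real (card ?K) \<le> real L"
      using clean_blocks_subset card_mono[OF _ clean_blocks_subset] finite_subset
      by (auto simp: card_gt_0_iff)
  qed
  then have K_ne: "?K \<noteq> {}" by auto
  have s_pos: "s > 0" using \<eta> \<mu>4 Bsz_pos by (simp add: s_def)
  have q: "(\<integral>y. norm y ^ 4 \<partial>P) / (real Bsz * s) \<le> q"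
  proof -
    have "real Bsz * s = (\<integral>y. norm y ^ 4 \<partial>P) / q"
      using \<eta> Bsz_pos by (simp add: s_def q_def)
    then show ?thesis using \<mu>4 \<eta> by (simp add: q_def)
  qed
  have \<delta>_pos: "\<delta> > 0"
    using outlier_margin(1)[OF \<eta> _ outliers _ card_K(2)] unfolding \<delta>_def by simp
  have margin: "real L * \<delta> \<le> c - q * real (card ?K)"
    using outlier_margin(2)[OF \<eta> _ outliers _ card_K(2)] unfolding \<delta>_def c_def q_def by simp
  define Bad where "Bad = {\<omega> \<in> space M. c \<le> (\<Sum>l\<in>?K. if s \<le> block_dev l \<omega> then 1 else 0)}"
  have c: "q * real (card ?K) \<le> c"
    using margin mult_pos_pos[OF _ \<delta>_pos, of "real L"] card_K by linarith
  note hoeffding = prob_many_bad_clean_blocks_le[OF K_ne s_pos q c, folded Bad_def]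
  show ?thesis
  proof (intro bexI conjI ballI)
    show "space M - Bad \<in> sets M" using hoeffding(1) by simp
    have "measure M Bad \<le> exp (- 2 * real L * \<delta>\<^sup>2)"
      using hoeffding(2) exp_neg_two_sq_div_le[OF card_K less_imp_le[OF \<delta>_pos] margin] by linarith
    then show "1 - exp (- 2 * real L * (2 / (4 + \<eta>) - real (card Out) / real L)\<^sup>2) \<le> measure M (space M - Bad)"
      using M.prob_compl[OF hoeffding(1)] by (simp add: \<delta>_def)
    show "real L < 2 * real (card {l \<in> ?K. block_dev l \<omega> < s})" if "\<omega> \<in> space M - Bad" for \<omega>
      using that by (intro majority_of_good_blocks) (auto simp: Bad_def c_def)
  qed
qed

lemma MoM_close_to_risk:
  assumes majority: "real L < 2 * real (card {l \<in> clean_blocks. block_dev l \<omega> < s})"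
    and Q: "Q \<in> proj_mats d"
  shows "\<bar>MoM L Bl Bsz (\<lambda>i. X i \<omega>) Q - (\<integral>y. fQ Q y \<partial>P)\<bar> \<le> sqrt (real CARD('p) - real d) * sqrt s"
  unfolding MoM_def
proof (rule median_close_if_majority_close[OF _ majority])
  show "{l \<in> clean_blocks. block_dev l \<omega> < s} \<subseteq> {1..L}" using clean_blocks_subset by auto
  have "real d \<le> real CARD('p)"
    using Q rank_bound[of Q] by (simp add: proj_mats_def)
  fix l assume l: "l \<in> {l \<in> clean_blocks. block_dev l \<omega> < s}"
  then have "card (Bl l) = Bsz" using clean_blocks_subset blocks_card by auto
  then have "\<bar>1 / real Bsz * (\<Sum>i\<in>Bl l. fQ Q (X i \<omega>)) - (\<integral>y. fQ Q y \<partial>P)\<bar>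
      \<le> sqrt (real CARD('p) - real d) * sqrt (block_dev l \<omega>)"
    using abs_block_mean_fQ_minus_risk_le[OF Q P.prob_space_axioms sets_P fourth_moment,
        of "Bl l" "\<lambda>i. X i \<omega>"]
    by (simp add: block_dev_def)
  also have "\<dots> \<le> sqrt (real CARD('p) - real d) * sqrt s"
    using l \<open>real d \<le> real CARD('p)\<close> by (intro mult_left_mono) auto
  finally show "\<bar>1 / real Bsz * (\<Sum>i\<in>Bl l. fQ Q (X i \<omega>)) - (\<integral>y. fQ Q y \<partial>P)\<bar>
      \<le> sqrt (real CARD('p) - real d) * sqrt s" .
qed

lemma risk_eq_0_if_fourth_moment_eq_0:
  assumes "(\<integral>y. norm y ^ 4 \<partial>P) = 0"
  shows "(\<integral>y. fQ Q y \<partial>P) = 0"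
proof -
  have "AE y in P. norm y ^ 4 = 0"
    using integral_nonneg_eq_0_iff_AE[OF fourth_moment] assms by simp
  then have "AE y in P. fQ Q y = 0"
    by (rule AE_mp) (auto simp: fQ_def)
  then show ?thesis by (rule integral_eq_zero_AE)
qed

theorem MoM_excess_risk_bound:
  assumes \<eta>: "\<eta> > 0" and outliers: "(2 + \<eta>) * real (card Out) < real L"
    and Qhat: "\<And>\<omega>. \<omega> \<in> space M \<Longrightarrow> Qhat \<omega> \<in> proj_mats d \<and>
        (\<forall>Q\<in>proj_mats d. MoM L Bl Bsz (\<lambda>i. X i \<omega>) (Qhat \<omega>) \<le> MoM L Bl Bsz (\<lambda>i. X i \<omega>) Q)"
    and Qstar: "Qstar \<in> proj_mats d \<and> (\<forall>Q\<in>proj_mats d. (\<integral>x. fQ Qstar x \<partial>P) \<le> (\<integral>x. fQ Q x \<partial>P))"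
  shows "\<exists>A\<in>sets M. 1 - exp (- 2 * real L * (2 / (4 + \<eta>) - real (card Out) / real L)\<^sup>2) \<le> measure M A
    \<and> (\<forall>\<omega>\<in>A. \<bar>(\<integral>x. fQ (Qhat \<omega>) x \<partial>P) - (\<integral>x. fQ Qstar x \<partial>P)\<bar>
        \<le> 2 * (sqrt (real CARD('p) - real d)
              * sqrt (2 * (4 + \<eta>) * (\<integral>y. norm y ^ 4 \<partial>P) / (\<eta> * real Bsz))))"
proof (cases "(\<integral>y. norm y ^ 4 \<partial>P) = 0")
  case True
  then show ?thesis
    using risk_eq_0_if_fourth_moment_eq_0 M.prob_space by (intro bexI[of _ "space M"]) auto
next
  case False
  then have "(\<integral>y. norm y ^ 4 \<partial>P) > 0" by (simp add: less_le)
  then obtain A where A: "A \<in> sets M"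
    "1 - exp (- 2 * real L * (2 / (4 + \<eta>) - real (card Out) / real L)\<^sup>2) \<le> measure M A"
    "\<And>\<omega>. \<omega> \<in> A \<Longrightarrow> real L < 2 * real (card {l \<in> clean_blocks.
        block_dev l \<omega> < 2 * (4 + \<eta>) * (\<integral>y. norm y ^ 4 \<partial>P) / (\<eta> * real Bsz)})"
    using prob_majority_of_good_blocks[OF \<eta> outliers] by blast
  have "\<bar>(\<integral>x. fQ (Qhat \<omega>) x \<partial>P) - (\<integral>x. fQ Qstar x \<partial>P)\<bar>
      \<le> 2 * (sqrt (real CARD('p) - real d) * sqrt (2 * (4 + \<eta>) * (\<integral>y. norm y ^ 4 \<partial>P) / (\<eta> * real Bsz)))"
    if "\<omega> \<in> A" for \<omega>
  proof -
    let ?t = "sqrt (real CARD('p) - real d) * sqrt (2 * (4 + \<eta>) * (\<integral>y. norm y ^ 4 \<partial>P) / (\<eta> * real Bsz))"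
    have "\<omega> \<in> space M" using A(1) that sets.sets_into_space by blast
    then have Qhat_\<omega>: "Qhat \<omega> \<in> proj_mats d"
      and "MoM L Bl Bsz (\<lambda>i. X i \<omega>) (Qhat \<omega>) \<le> MoM L Bl Bsz (\<lambda>i. X i \<omega>) Qstar"
      and "(\<integral>x. fQ Qstar x \<partial>P) \<le> (\<integral>x. fQ (Qhat \<omega>) x \<partial>P)"
      using Qhat Qstar by auto
    moreover have "\<bar>MoM L Bl Bsz (\<lambda>i. X i \<omega>) (Qhat \<omega>) - (\<integral>x. fQ (Qhat \<omega>) x \<partial>P)\<bar> \<le> ?t"
      and "\<bar>MoM L Bl Bsz (\<lambda>i. X i \<omega>) Qstar - (\<integral>x. fQ Qstar x \<partial>P)\<bar> \<le> ?t"
      using MoM_close_to_risk[OF A(3)[OF that]] Qhat_\<omega> Qstar by auto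
    ultimately show ?thesis unfolding abs_le_iff by linarith
  qed
  then show ?thesis using A by blast
qed

end

theorem theorem3:
  fixes M :: "'w measure" and P :: "(real^'p) measure"
    and X :: "nat \<Rightarrow> 'w \<Rightarrow> real^'p"
    and Inl Out :: "nat set" and Bl :: "nat \<Rightarrow> nat set"
    and N L Bsz d :: nat and \<eta> :: real
    and Qhat :: "'w \<Rightarrow> real^'p^'p" and Qstar :: "real^'p^'p"
  assumes M: "prob_space M"
    and P: "prob_space P" and sets_P: "sets P = sets borel"
    and part: "Inl \<union> Out = {1..N}" "Inl \<inter> Out = {}"
    and blocks_cover: "(\<Union>l\<in>{1..L}. Bl l) = {1..N}"
    and blocks_disj: "\<And>l l'. l \<in> {1..L} \<Longrightarrow> l' \<in> {1..L} \<Longrightarrow> l \<noteq> l' \<Longrightarrow> Bl l \<inter> Bl l' = {}"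
    and blocks_size: "\<And>l. l \<in> {1..L} \<Longrightarrow> card (Bl l) = Bsz"
    and NLB: "N = L * Bsz"
    and NL: "N > L"
    and A1_meas: "\<And>i. i \<in> Inl \<Longrightarrow> X i \<in> measurable M borel"
    and A1_indep: "prob_space.indep_vars M (\<lambda>_. borel) X Inl"
    and A1_distr: "\<And>i. i \<in> Inl \<Longrightarrow> distr M borel (X i) = P"
    and A2: "integrable P (\<lambda>x. norm x ^ 4)"
    and A3: "\<eta> > 0" "real L > (2 + \<eta>) * real (card Out)"
    and Qhat_argmin: "\<And>\<omega>. \<omega> \<in> space M \<Longrightarrow> Qhat \<omega> \<in> proj_mats d \<and>
        (\<forall>Q\<in>proj_mats d. MoM L Bl Bsz (\<lambda>i. X i \<omega>) (Qhat \<omega>) \<le> MoM L Bl Bsz (\<lambda>i. X i \<omega>) Q)"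
    and Qstar_argmin: "Qstar \<in> proj_mats d \<and>
        (\<forall>Q\<in>proj_mats d. (\<integral>x. fQ Qstar x \<partial>P) \<le> (\<integral>x. fQ Q x \<partial>P))"
  shows "let p = real CARD('p);
             \<mu>2 = (\<integral>x. norm x ^ 2 \<partial>P);
             \<mu>4 = (\<integral>x. norm x ^ 4 \<partial>P);
             CP = (\<mu>4 + 2 * \<mu>2\<^sup>2) * (p - real d) + (\<mu>2\<^sup>2 - 1) * (p - real d)\<^sup>2;
             C = 2 * max (sqrt (8 * (4 + \<eta>) * CP / \<eta>))
                         (16 * sqrt ((p - real d) * \<mu>4) * (4 + \<eta>) / \<eta>)
         in \<exists>A\<in>sets M.
              measure M A \<ge> 1 - 2 * exp (- 2 * real L * (2 / (4 + \<eta>) - real (card Out) / real L)\<^sup>2)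
              \<and> (\<forall>\<omega>\<in>A. \<bar>(\<integral>x. fQ (Qhat \<omega>) x \<partial>P) - (\<integral>x. fQ Qstar x \<partial>P)\<bar>
                       \<le> 2 * C * max (sqrt (real L / real N)) (sqrt (real (card Inl)) / real N))"
proof -
  have L_pos: "L > 0" and Bsz_pos: "Bsz > 0"
    using NLB NL by (cases "L = 0"; cases "Bsz = 0"; simp)+
  then have rate: "sqrt (1 / real Bsz) = sqrt (real L / real N)"
    by (simp add: NLB)
  have finite_Out: "finite Out" using part(1) by (metis finite_Un finite_atLeastAtMost)
  have blocks_subset: "Bl l \<subseteq> Inl \<union> Out" if "l \<in> {1..L}" for l
    using that blocks_cover part(1) by blast
  interpret mom_sample M P X Inl Out Bl L Bsz
    by (rule mom_sample.intro[OF M P mom_sample_axioms.intro[OF sets_P A2 A1_meas A1_indep A1_distr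
          finite_Out blocks_subset blocks_disj blocks_size Bsz_pos]])
  obtain A where A: "A \<in> sets M"
    "1 - exp (- 2 * real L * (2 / (4 + \<eta>) - real (card Out) / real L)\<^sup>2) \<le> measure M A"
    "\<And>\<omega>. \<omega> \<in> A \<Longrightarrow> \<bar>(\<integral>x. fQ (Qhat \<omega>) x \<partial>P) - (\<integral>x. fQ Qstar x \<partial>P)\<bar>
        \<le> 2 * (sqrt (real CARD('p) - real d) * sqrt (2 * (4 + \<eta>) * (\<integral>x. norm x ^ 4 \<partial>P) / (\<eta> * real Bsz)))"
    using MoM_excess_risk_bound[OF A3 Qhat_argmin Qstar_argmin] by blast
  have "real d \<le> real CARD('p)" using Qstar_argmin rank_bound[of Qstar] by (simp add: proj_mats_def)
  then have bound: "2 * (sqrt (real CARD('p) - real d)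
        * sqrt (2 * (4 + \<eta>) * (\<integral>x. norm x ^ 4 \<partial>P) / (\<eta> * real Bsz)))
      \<le> 2 * (2 * max a (16 * sqrt ((real CARD('p) - real d) * (\<integral>x. norm x ^ 4 \<partial>P)) * (4 + \<eta>) / \<eta>))
          * max (sqrt (real L / real N)) c" for a c
    unfolding rate[symmetric] using A3(1) Bsz_pos by (intro twice_sqrt_threshold_le_constant_rate) auto
  show ?thesis unfolding Let_def
  proof (intro bexI[OF _ A(1)] conjI ballI)
    show "1 - 2 * exp (- 2 * real L * (2 / (4 + \<eta>) - real (card Out) / real L)\<^sup>2) \<le> measure M A"
      using A(2) exp_ge_zero[of "- 2 * real L * (2 / (4 + \<eta>) - real (card Out) / real L)\<^sup>2"] by linarith
  qed (rule order_trans[OF A(3) bound])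
qed

end
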